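(* Let $h:(0,\infty)\to\mathbb{R}$ be a differentiable, monotonically increasing (non-decreasing) function satisfying $h(1/t)\ge \frac{1}{t}\,h'(1/t)$ for all $t>0$, where $h'$ denotes the derivative of $h$. Define $g(t)=\min\{h(t),\,t\,h(1/t)\}$ for $t>0$. Then $g$ is monotonically increasing on $(0,\infty)$, i.e. $g(t_1)\ge g(t_2)$ whenever $t_1\ge t_2>0$.
   Context: Here $h$ plays the role of a parametrized function $h_{\boldsymbol{\theta}}$ (for a fixed parameter $\boldsymbol{\theta}$) and $g$ that of $g_{\boldsymbol{\theta}}$. *)

theory Defs
  imports "HOL-Analysis.Analysis"
begin

end

theory Submission
  imports Defs
begin

(* The map t \<mapsto> t h(1/t) has derivative h(1/t) - h'(1/t)/t, which the hypothesis makes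
   nonnegative, so it is non-decreasing like h; a minimum of two non-decreasing functions is
   non-decreasing. *)

lemma has_real_derivative_times_inverse_comp:
  fixes h :: "real \<Rightarrow> real"
  assumes deriv: "(h has_real_derivative D) (at (1 / x))" and x: "x \<noteq> 0"
  shows "((\<lambda>t. t * h (1 / t)) has_real_derivative h (1 / x) - (1 / x) * D) (at x)"
proof -
  have inverse: "((\<lambda>t. 1 / t) has_real_derivative - 1 / x\<^sup>2) (at x)"
    using x by (auto intro!: derivative_eq_intros simp: power2_eq_square)
  have "((\<lambda>t. t * h (1 / t)) has_real_derivative 1 * h (1 / x) + D * (- 1 / x\<^sup>2) * x) (at x)"
    by (rule DERIV_mult[OF DERIV_ident DERIV_chain2[OF deriv inverse]])
  also have "1 * h (1 / x) + D * (- 1 / x\<^sup>2) * x = h (1 / x) - (1 / x) * D"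
    using x by (simp add: power2_eq_square field_simps)
  finally show ?thesis .
qed

lemma mono_on_times_inverse_comp:
  fixes h h' :: "real \<Rightarrow> real"
  assumes deriv: "\<And>t. t > 0 \<Longrightarrow> (h has_real_derivative h' t) (at t)"
    and cond: "\<And>t. t > 0 \<Longrightarrow> (1 / t) * h' (1 / t) \<le> h (1 / t)"
  shows "mono_on {0<..} (\<lambda>t. t * h (1 / t))"
proof (rule mono_onI)
  fix s t :: real
  assume s: "s \<in> {0<..}" and "s \<le> t"
  from \<open>s \<le> t\<close> show "s * h (1 / s) \<le> t * h (1 / t)"
  proof (rule DERIV_nonneg_imp_nondecreasing)
    fix x assume "s \<le> x"
    with s have x: "x > 0" by simp
    have "((\<lambda>t. t * h (1 / t)) has_real_derivative h (1 / x) - (1 / x) * h' (1 / x)) (at x)"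
      using x by (intro has_real_derivative_times_inverse_comp deriv) simp_all
    moreover have "0 \<le> h (1 / x) - (1 / x) * h' (1 / x)"
      using cond[OF x] by simp
    ultimately show "\<exists>y. ((\<lambda>t. t * h (1 / t)) has_real_derivative y) (at x) \<and> 0 \<le> y"
      by blast
  qed
qed

lemma mono_on_min:
  fixes f g :: "'a :: order \<Rightarrow> 'b :: linorder"
  assumes "mono_on A f" and "mono_on A g"
  shows "mono_on A (\<lambda>x. min (f x) (g x))"
  using assms by (auto intro!: mono_onI min.mono dest: mono_onD)

theorem theorem3:
  fixes h h' :: "real \<Rightarrow> real"
  assumes deriv: "\<And>t. t > 0 \<Longrightarrow> (h has_real_derivative h' t) (at t)"
    and mono: "mono_on {0<..} h"
    and cond: "\<And>t. t > 0 \<Longrightarrow> h (1 / t) \<ge> (1 / t) * h' (1 / t)"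
  shows "\<And>t1 t2. t2 > 0 \<Longrightarrow> t1 \<ge> t2 \<Longrightarrow>
           min (h t1) (t1 * h (1 / t1)) \<ge> min (h t2) (t2 * h (1 / t2))"
  using mono_on_min[OF mono mono_on_times_inverse_comp[OF deriv cond]]
  by (simp add: mono_on_def)

end
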